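(* Let $f_c>0$, $B>0$, $t_{\max}>0$, let $K\ge 3$ be an odd integer, and for $k\in\{1,\dots,K\}$ let $f_k = f_c + \frac{B}{K}\left(k-1-\frac{K-1}{2}\right)$ and $\zeta_k=f_k/f_c$. Let $N\ge1$ and $m\ge1$ be integers, let $\psi_{c,l}\ge 0$, and define $\gamma_{n,m}^{(l)} = ((m-1)N+n-1)\psi_{c,l}$ for $n=1,\dots,N$, and $\vartheta_{\max}=2f_c t_{\max}$. Consider the problem $$\min_{x_{1,m}^{(l)},\dots,x_{N,m}^{(l)}\in\mathbb{R},\ \vartheta_m^{(l)}\in\mathbb{R}}\ \frac{1}{K}\sum_{k=1}^{K}\sum_{n=1}^{N}\left(x_{n,m}^{(l)}-\zeta_k\vartheta_m^{(l)}+\zeta_k\gamma_{n,m}^{(l)}\right)^2 \quad\text{subject to}\quad 0\le \vartheta_m^{(l)}\le\vartheta_{\max}.$$ Its optimal solution is given by $$x_{n,m}^{(l)\star}=\begin{cases}\frac{N-2n+1}{2}\psi_{c,l}, & \text{if } 0\le\psi_{c,l}\le \frac{4f_ct_{\max}}{(2m-1)N-1},\\[2pt] \vartheta_{\max}-\gamma_{n,m}^{(l)}, & \text{otherwise},\end{cases}\qquad n=1,\dots,N,$$ and $\vartheta_m^{(l)\star}=2f_c t_m^{(l)\star}$, where $$t_m^{(l)\star}=\begin{cases}\frac{(2m-1)N-1}{4f_c}\psi_{c,l}, & \text{if } 0\le\psi_{c,l}\le \frac{4f_ct_{\max}}{(2m-1)N-1},\\[2pt] t_{\max}, & \text{otherwise},\end{cases}$$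 with the convention that $\frac{4f_ct_{\max}}{(2m-1)N-1}=+\infty$ when $(2m-1)N-1=0$.
   Context: This is the phase-domain formulation of joint phase-shifter/true-time-delay precoding for one RF chain $l$ and one TTD index $m$: $x_{n,m}^{(l)}$ (in units of $\pi$) are the phase-shifter phases of the $N$ antennas connected to the $m$th TTD, $\vartheta_m^{(l)}=2f_ct_m^{(l)}$ with $t_m^{(l)}\in[0,t_{\max}]$ the TTD time delay, and $-\zeta_k\gamma_{n,m}^{(l)}$ is the phase (in units of $\pi$) of the optimal fully-digital precoder at subcarrier $k$. The paper assumes throughout that $\psi_{c,l}\ge 0$. *)

theory Defs
  imports Complex_Main
begin

definition subcarrier_freq :: "real \<Rightarrow> real \<Rightarrow> nat \<Rightarrow> nat \<Rightarrow> real" where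
  "subcarrier_freq fc B K k = fc + B / real K * (real k - 1 - (real K - 1) / 2)"

definition zeta :: "real \<Rightarrow> real \<Rightarrow> nat \<Rightarrow> nat \<Rightarrow> real" where
  "zeta fc B K k = subcarrier_freq fc B K k / fc"

definition gamma :: "nat \<Rightarrow> nat \<Rightarrow> real \<Rightarrow> nat \<Rightarrow> real" where
  "gamma N m psi n = (real ((m - 1) * N + n) - 1) * psi"

definition objective ::
  "real \<Rightarrow> real \<Rightarrow> nat \<Rightarrow> nat \<Rightarrow> nat \<Rightarrow> real \<Rightarrow> (nat \<Rightarrow> real) \<Rightarrow> real \<Rightarrow> real" where
  "objective fc B K N m psi x theta =
     1 / real K * (\<Sum>k = 1..K. \<Sum>n = 1..N.
        (x n - zeta fc B K k * theta + zeta fc B K k * gamma N m psi n)\<^sup>2)"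

definition small_psi :: "real \<Rightarrow> real \<Rightarrow> nat \<Rightarrow> nat \<Rightarrow> real \<Rightarrow> bool" where
  "small_psi fc tmax N m psi \<longleftrightarrow>
     0 \<le> psi \<and> (real ((2 * m - 1) * N) - 1 = 0 \<or>
                  psi \<le> 4 * fc * tmax / (real ((2 * m - 1) * N) - 1))"

definition x_opt :: "real \<Rightarrow> real \<Rightarrow> nat \<Rightarrow> nat \<Rightarrow> real \<Rightarrow> nat \<Rightarrow> real" where
  "x_opt fc tmax N m psi n =
     (if small_psi fc tmax N m psi then (real N - 2 * real n + 1) / 2 * psi
      else 2 * fc * tmax - gamma N m psi n)"

definition t_opt :: "real \<Rightarrow> real \<Rightarrow> nat \<Rightarrow> nat \<Rightarrow> real \<Rightarrow> real" where
  "t_opt fc tmax N m psi =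
     (if small_psi fc tmax N m psi then (real ((2 * m - 1) * N) - 1) / (4 * fc) * psi
      else tmax)"

end

theory Submission
  imports Defs
begin

text \<open>Since the offsets \<open>\<zeta>\<^sub>k - 1\<close> and \<open>\<gamma>\<^sub>n - \<mu>\<close> (with \<open>\<mu>\<close> the mean of the \<open>\<gamma>\<^sub>n\<close>)
  both sum to zero, expanding the squares splits the objective into
  \<open>\<Sum>\<^sub>n (x\<^sub>n - \<theta> + \<gamma>\<^sub>n)\<^sup>2 + c (\<theta> - \<mu>)\<^sup>2 + const\<close> with \<open>c > 0\<close>. The first term vanishes
  exactly for \<open>x\<^sub>n = \<theta> - \<gamma>\<^sub>n\<close>, and the second is minimised over \<open>[0, \<theta>\<^sub>m\<^sub>a\<^sub>x]\<close> exactly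
  at \<open>min \<mu> \<theta>\<^sub>m\<^sub>a\<^sub>x\<close>, which is what the case distinction in \<open>t_opt\<close> computes.\<close>

lemma sum_square_shift_centered:
  fixes u :: "'a \<Rightarrow> real"
  assumes "(\<Sum>i\<in>A. u i) = 0"
  shows "(\<Sum>i\<in>A. (u i + c)\<^sup>2) = (\<Sum>i\<in>A. (u i)\<^sup>2) + real (card A) * c\<^sup>2"
proof -
  have "(\<Sum>i\<in>A. (u i + c)\<^sup>2) = (\<Sum>i\<in>A. (u i)\<^sup>2 + 2 * c * u i + c\<^sup>2)"
    by (simp add: power2_sum algebra_simps)
  also have "\<dots> = (\<Sum>i\<in>A. (u i)\<^sup>2) + 2 * c * (\<Sum>i\<in>A. u i) + real (card A) * c\<^sup>2"
    by (simp add: sum.distrib sum_distrib_left)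
  finally show ?thesis
    using assms by simp
qed

lemma sum_atLeastAtMost_centered: "(\<Sum>k = 1..n. real k - (real n + 1) / 2) = 0"
proof -
  have "2 * (\<Sum>k = 1..n. real k) = real n * (real n + 1)"
    using double_gauss_sum_from_Suc_0 [of n, where ?'a = real] by simp
  then show ?thesis
    by (simp add: sum_subtractf)
qed

lemma sum_zeta_minus_one:
  assumes "fc \<noteq> 0"
  shows "(\<Sum>k = 1..K. zeta fc B K k - 1) = 0"
proof -
  have "zeta fc B K k - 1 = B / (real K * fc) * (real k - (real K + 1) / 2)" for k
    using assms by (simp add: zeta_def subcarrier_freq_def field_simps)
  then have "(\<Sum>k = 1..K. zeta fc B K k - 1) =
      B / (real K * fc) * (\<Sum>k = 1..K. real k - (real K + 1) / 2)"
    by (simp add: sum_distrib_left)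
  then show ?thesis
    by (simp only: sum_atLeastAtMost_centered mult_zero_right)
qed

definition zeta_spread :: "real \<Rightarrow> real \<Rightarrow> nat \<Rightarrow> real" where
  "zeta_spread fc B K = (\<Sum>k = 1..K. (zeta fc B K k - 1)\<^sup>2)"

lemma zeta_spread_pos:
  assumes "fc \<noteq> 0" "B \<noteq> 0" "K \<ge> 2"
  shows "zeta_spread fc B K > 0"
proof -
  have "zeta fc B K 1 - 1 = - B * (real K - 1) / (2 * real K * fc)"
    using assms by (simp add: zeta_def subcarrier_freq_def field_simps)
  then have "(zeta fc B K 1 - 1)\<^sup>2 > 0"
    using assms by simp
  also have "(zeta fc B K 1 - 1)\<^sup>2 \<le> zeta_spread fc B K"
    unfolding zeta_spread_def using assms by (intro member_le_sum) auto
  finally show ?thesis .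
qed

lemma sum_zeta_square:
  assumes "fc \<noteq> 0"
  shows "(\<Sum>k = 1..K. (y + zeta fc B K k * d)\<^sup>2) = real K * (y + d)\<^sup>2 + zeta_spread fc B K * d\<^sup>2"
proof -
  have centered: "(\<Sum>k = 1..K. (zeta fc B K k - 1) * d) = 0"
    using sum_zeta_minus_one [OF assms] by (simp add: sum_distrib_right [symmetric])
  have "(\<Sum>k = 1..K. (y + zeta fc B K k * d)\<^sup>2) = (\<Sum>k = 1..K. ((zeta fc B K k - 1) * d + (y + d))\<^sup>2)"
    by (simp add: algebra_simps)
  also have "\<dots> = (\<Sum>k = 1..K. ((zeta fc B K k - 1) * d)\<^sup>2) + real K * (y + d)\<^sup>2"
    using sum_square_shift_centered [OF centered] by simp
  finally show ?thesis
    by (simp add: zeta_spread_def power_mult_distrib sum_distrib_right)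
qed

definition gamma_mean :: "nat \<Rightarrow> nat \<Rightarrow> real \<Rightarrow> real" where
  "gamma_mean N m psi = (real ((2 * m - 1) * N) - 1) * psi / 2"

lemma gamma_eq_gamma_mean_plus:
  assumes "m \<ge> 1"
  shows "gamma N m psi n = gamma_mean N m psi + (real n - (real N + 1) / 2) * psi"
  using assms by (simp add: gamma_def gamma_mean_def of_nat_diff field_simps)

lemma sum_gamma_minus_mean:
  assumes "m \<ge> 1"
  shows "(\<Sum>n = 1..N. gamma N m psi n - gamma_mean N m psi) = 0"
  using sum_atLeastAtMost_centered [of N]
  by (simp add: gamma_eq_gamma_mean_plus [OF assms] sum_distrib_right [symmetric])

lemma objective_decomposition:
  fixes N m :: nat and psi fc B :: real
  assumes "fc \<noteq> 0" "K > 0" "m \<ge> 1"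
  defines "g \<equiv> gamma N m psi" and "\<mu> \<equiv> gamma_mean N m psi" and "c \<equiv> zeta_spread fc B K / real K"
  shows "objective fc B K N m psi x \<theta> =
    (\<Sum>n = 1..N. (x n - \<theta> + g n)\<^sup>2) + c * real N * (\<theta> - \<mu>)\<^sup>2 + c * (\<Sum>n = 1..N. (g n - \<mu>)\<^sup>2)"
proof -
  have "objective fc B K N m psi x \<theta> =
      1 / real K * (\<Sum>n = 1..N. \<Sum>k = 1..K. (x n + zeta fc B K k * (g n - \<theta>))\<^sup>2)"
    unfolding objective_def g_def by (subst sum.swap) (simp add: algebra_simps)
  also have "\<dots> = 1 / real K *
      (\<Sum>n = 1..N. real K * (x n + (g n - \<theta>))\<^sup>2 + zeta_spread fc B K * (g n - \<theta>)\<^sup>2)"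
    using sum_zeta_square [OF assms(1), of "x n" B K "g n - \<theta>" for n] by simp
  also have "\<dots> = (\<Sum>n = 1..N. (x n - \<theta> + g n)\<^sup>2) + c * (\<Sum>n = 1..N. ((g n - \<mu>) + (\<mu> - \<theta>))\<^sup>2)"
    using assms(2) by (simp add: c_def sum.distrib sum_distrib_left field_simps)
  also have "(\<Sum>n = 1..N. ((g n - \<mu>) + (\<mu> - \<theta>))\<^sup>2) = (\<Sum>n = 1..N. (g n - \<mu>)\<^sup>2) + real N * (\<theta> - \<mu>)\<^sup>2"
    using sum_square_shift_centered
        [OF sum_gamma_minus_mean [OF assms(3), of N psi], where c = "\<mu> - \<theta>"]
    unfolding g_def \<mu>_def by (simp add: power2_commute)
  finally show ?thesis
    by (simp add: algebra_simps)
qed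

lemma one_le_of_nat_odd_mult:
  assumes "N \<ge> 1" "m \<ge> 1"
  shows "1 \<le> real ((2 * m - 1) * N)"
proof -
  have "(2 * m - 1) * N \<ge> 1"
    using assms by simp
  then show ?thesis
    by (metis of_nat_1 of_nat_le_iff)
qed

lemma gamma_mean_nonneg:
  assumes "N \<ge> 1" "m \<ge> 1" "psi \<ge> 0"
  shows "gamma_mean N m psi \<ge> 0"
proof -
  have "real ((2 * m - 1) * N) - 1 \<ge> 0"
    using one_le_of_nat_odd_mult [OF assms(1,2)] by linarith
  then show ?thesis
    unfolding gamma_mean_def using assms(3)
    by (metis divide_nonneg_pos mult_nonneg_nonneg zero_less_numeral)
qed

lemma small_psi_iff_gamma_mean_le:
  assumes "fc > 0" "tmax \<ge> 0" "psi \<ge> 0" "N \<ge> 1" "m \<ge> 1"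
  shows "small_psi fc tmax N m psi \<longleftrightarrow> gamma_mean N m psi \<le> 2 * fc * tmax"
proof -
  define a where "a = real ((2 * m - 1) * N) - 1"
  have "a \<ge> 0"
    using one_le_of_nat_odd_mult [OF assms(4,5)] unfolding a_def by linarith
  then consider "a = 0" | "a > 0"
    by linarith
  then show ?thesis
  proof cases
    case 1
    then show ?thesis
      unfolding small_psi_def gamma_mean_def a_def [symmetric] using assms by simp
  next
    case 2
    then show ?thesis
      unfolding small_psi_def gamma_mean_def a_def [symmetric] using assms
      by (simp add: pos_le_divide_eq mult_ac)
  qed
qed

lemma two_fc_t_opt_eq_min:
  assumes "fc > 0" "tmax \<ge> 0" "psi \<ge> 0" "N \<ge> 1" "m \<ge> 1"
  shows "2 * fc * t_opt fc tmax N m psi = min (gamma_mean N m psi) (2 * fc * tmax)"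
  using small_psi_iff_gamma_mean_le [OF assms] assms(1)
  by (simp add: t_opt_def gamma_mean_def)

lemma x_opt_eq:
  assumes "fc \<noteq> 0" "m \<ge> 1"
  shows "x_opt fc tmax N m psi = (\<lambda>n. 2 * fc * t_opt fc tmax N m psi - gamma N m psi n)"
  using assms
  by (auto simp: x_opt_def t_opt_def gamma_eq_gamma_mean_plus gamma_mean_def field_simps)

lemma sq_dist_clamp_le:
  fixes \<theta> \<mu> M :: real
  assumes "\<theta> \<le> M"
  shows "(min \<mu> M - \<mu>)\<^sup>2 \<le> (\<theta> - \<mu>)\<^sup>2"
  using assms by (simp add: abs_le_square_iff [symmetric])

lemma sq_dist_clamp_unique:
  fixes \<theta> \<mu> M :: real
  assumes "\<theta> \<le> M" "(\<theta> - \<mu>)\<^sup>2 \<le> (min \<mu> M - \<mu>)\<^sup>2"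
  shows "\<theta> = min \<mu> M"
  using assms by (auto simp: abs_le_square_iff [symmetric] min_def split: if_splits)

lemma clamped_least_squares:
  fixes F :: "('a \<Rightarrow> real) \<Rightarrow> real \<Rightarrow> real" and g :: "'a \<Rightarrow> real"
  assumes "finite A" "c > 0"
    and F: "\<And>x \<theta>. F x \<theta> = (\<Sum>n\<in>A. (x n - \<theta> + g n)\<^sup>2) + c * (\<theta> - \<mu>)\<^sup>2 + C"
    and "\<theta> \<le> M"
  defines "\<theta>\<^sub>0 \<equiv> min \<mu> M"
  shows "F (\<lambda>n. \<theta>\<^sub>0 - g n) \<theta>\<^sub>0 \<le> F x \<theta>"
    and "F x \<theta> = F (\<lambda>n. \<theta>\<^sub>0 - g n) \<theta>\<^sub>0 \<Longrightarrow> \<theta> = \<theta>\<^sub>0 \<and> (\<forall>n\<in>A. x n = \<theta>\<^sub>0 - g n)"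
proof -
  define S where "S = (\<Sum>n\<in>A. (x n - \<theta> + g n)\<^sup>2)"
  have S_nonneg: "S \<ge> 0"
    unfolding S_def by (simp add: sum_nonneg)
  have F_opt: "F (\<lambda>n. \<theta>\<^sub>0 - g n) \<theta>\<^sub>0 = c * (\<theta>\<^sub>0 - \<mu>)\<^sup>2 + C"
    by (simp add: F)
  have dist_le: "c * (\<theta>\<^sub>0 - \<mu>)\<^sup>2 \<le> c * (\<theta> - \<mu>)\<^sup>2"
    using sq_dist_clamp_le [OF \<open>\<theta> \<le> M\<close>] \<open>c > 0\<close> by (simp add: \<theta>\<^sub>0_def)
  show "F (\<lambda>n. \<theta>\<^sub>0 - g n) \<theta>\<^sub>0 \<le> F x \<theta>"
    using F_opt F [of x \<theta>] S_nonneg dist_le by (simp add: S_def)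
  assume "F x \<theta> = F (\<lambda>n. \<theta>\<^sub>0 - g n) \<theta>\<^sub>0"
  then have "S + c * (\<theta> - \<mu>)\<^sup>2 = c * (\<theta>\<^sub>0 - \<mu>)\<^sup>2"
    using F_opt F [of x \<theta>] by (simp add: S_def)
  then have "S = 0" and "c * (\<theta> - \<mu>)\<^sup>2 \<le> c * (\<theta>\<^sub>0 - \<mu>)\<^sup>2"
    using S_nonneg dist_le by linarith+
  then have "\<theta> = \<theta>\<^sub>0" and "\<forall>n\<in>A. (x n - \<theta> + g n)\<^sup>2 = 0"
    using sq_dist_clamp_unique [OF \<open>\<theta> \<le> M\<close>] \<open>c > 0\<close> \<open>finite A\<close>
    by (simp_all add: \<theta>\<^sub>0_def S_def sum_nonneg_eq_0_iff)
  then show "\<theta> = \<theta>\<^sub>0 \<and> (\<forall>n\<in>A. x n = \<theta>\<^sub>0 - g n)"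
    by (auto simp: algebra_simps)
qed

theorem theorem1:
  fixes fc B tmax psi :: real and K N m :: nat
  assumes "fc > 0" "B > 0" "tmax > 0"
    and "K \<ge> 3" "odd K"
    and "N \<ge> 1" "m \<ge> 1"
    and "psi \<ge> 0"
  shows "0 \<le> 2 * fc * t_opt fc tmax N m psi
       \<and> 2 * fc * t_opt fc tmax N m psi \<le> 2 * fc * tmax
       \<and> (\<forall>x theta. 0 \<le> theta \<and> theta \<le> 2 * fc * tmax \<longrightarrow>
            objective fc B K N m psi (x_opt fc tmax N m psi) (2 * fc * t_opt fc tmax N m psi)
              \<le> objective fc B K N m psi x theta)
       \<and> (\<forall>x theta. 0 \<le> theta \<and> theta \<le> 2 * fc * tmax \<and>
            objective fc B K N m psi x theta
              = objective fc B K N m psi (x_opt fc tmax N m psi) (2 * fc * t_opt fc tmax N m psi)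
            \<longrightarrow> theta = 2 * fc * t_opt fc tmax N m psi
                \<and> (\<forall>n \<in> {1..N}. x n = x_opt fc tmax N m psi n))"
proof -
  let ?\<mu> = "gamma_mean N m psi" and ?M = "2 * fc * tmax"
  have \<theta>_opt: "2 * fc * t_opt fc tmax N m psi = min ?\<mu> ?M"
    using assms by (intro two_fc_t_opt_eq_min) auto
  have x_opt: "x_opt fc tmax N m psi = (\<lambda>n. min ?\<mu> ?M - gamma N m psi n)"
    using x_opt_eq [of fc m] assms by (simp add: \<theta>_opt)
  have c_pos: "zeta_spread fc B K / real K * real N > 0"
    using zeta_spread_pos [of fc B K] assms by simp
  have objective: "objective fc B K N m psi x \<theta> =
      (\<Sum>n\<in>{1..N}. (x n - \<theta> + gamma N m psi n)\<^sup>2)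
      + zeta_spread fc B K / real K * real N * (\<theta> - ?\<mu>)\<^sup>2
      + zeta_spread fc B K / real K * (\<Sum>n = 1..N. (gamma N m psi n - ?\<mu>)\<^sup>2)" for x \<theta>
    using assms by (intro objective_decomposition) auto
  note least_squares = clamped_least_squares [OF finite_atLeastAtMost c_pos objective]
  have "0 \<le> min ?\<mu> ?M"
    using gamma_mean_nonneg [of N m psi] assms by simp
  moreover have "min ?\<mu> ?M \<le> ?M"
    by simp
  ultimately show ?thesis
    unfolding x_opt \<theta>_opt using least_squares by blast
qed

end
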